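(* If $\nu>-1$ and $x\in[0,\alpha_{\nu,1})$, then $$d_\nu(x)\leq\frac{x^\nu e^{-\frac{3x^2}{4(\nu+1)}}}{2^\nu\Gamma(\nu+1)}.$$
   Context: $J_\nu$ denotes the Bessel function of the first kind of order $\nu$. The Dini function is $d_\nu(x)=(1-\nu)J_\nu(x)+xJ_\nu'(x)$, and $\alpha_{\nu,1}$ denotes its first positive zero. *)

theory Defs
  imports "HOL-Analysis.Analysis"
begin

definition besselJ :: "real \<Rightarrow> real \<Rightarrow> real" where
  "besselJ \<nu> x = (\<Sum>k. (-1) ^ k / (fact k * Gamma (real k + \<nu> + 1)) * (x / 2) powr (2 * real k + \<nu>))"

definition dini :: "real \<Rightarrow> real \<Rightarrow> real" where
  "dini \<nu> x = (1 - \<nu>) * besselJ \<nu> x + x * deriv (besselJ \<nu>) x"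

definition alpha1 :: "real \<Rightarrow> real" where
  "alpha1 \<nu> = Inf {x. 0 < x \<and> dini \<nu> x = 0}"

end

theory Submission
  imports Defs
begin

(* Write S_mu(t) = sum_k (-1)^k t^k / (k! Gamma(k + mu + 1)) (bessel_series), so that
   J_nu(x) = (x/2)^nu S_nu(x^2/4) and d_nu(x) = (x/2)^nu G(x^2/4) with G(t) = S_nu(t) - 2t S_(nu+1)(t)
   (dini_series).  From S_mu' = -S_(mu+1) and t S_(mu+2) = (mu+1) S_(mu+1) - S_mu one gets, for
   c = 3/(nu+1),
     (nu+1) e^(-ct) (e^(ct) G(t))' = t ((2nu - 1) S_(nu+2)(t) - 6 S_(nu+1)(t)).
   Below the first zero of d_nu the function G stays positive, and positivity propagates to
   S_nu, ..., S_(nu+3): at a first zero of S_(mu+1) the recurrence would make it increasing.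
   The bracket is then nonpositive (for large t by G > 0, for small t because S_(nu+2) decreases
   and S_(nu+1) lies above its tangent at 0), so e^(ct) G(t) decreases from G(0) = 1/Gamma(nu+1). *)

lemma pos_on_interval_if_derivative_pos_at_zeros:
  fixes f f' :: "real \<Rightarrow> real"
  assumes deriv: "\<And>s. 0 \<le> s \<Longrightarrow> s \<le> T \<Longrightarrow> (f has_real_derivative f' s) (at s)"
    and f0: "f 0 > 0"
    and zeros: "\<And>z. 0 < z \<Longrightarrow> z \<le> T \<Longrightarrow> f z = 0 \<Longrightarrow> f' z > 0"
  shows "\<forall>s\<in>{0..T}. f s > 0"
proof (rule ccontr)
  assume "\<not> ?thesis"
  then obtain s0 where s0: "s0 \<in> {0..T}" "f s0 \<le> 0" by auto
  have cont: "continuous_on {0..T} f"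
    using deriv by (meson DERIV_isCont atLeastAtMost_iff continuous_at_imp_continuous_on)
  have zero_before: "\<exists>w. 0 \<le> w \<and> w \<le> s \<and> f w = 0" if "s \<in> {0..T}" "f s \<le> 0" for s
    using IVT2'[of f s 0 0] continuous_on_subset[OF cont] that f0 by auto
  define Z where "Z = {s \<in> {0..T}. f s = 0}"
  have bdd: "bdd_below Z"
    by (auto simp: Z_def intro: bdd_belowI[of _ 0])
  have "Z \<noteq> {}"
    using zero_before[OF s0] s0 by (force simp: Z_def)
  moreover have "closed Z"
    unfolding Z_def by (rule continuous_closed_preimage_constant[OF cont]) simp
  ultimately have "Inf Z \<in> Z"
    using bdd closed_contains_Inf by blast
  then obtain z where z: "z = Inf Z" "0 < z" "z \<le> T" "f z = 0"
    using f0 unfolding Z_def by (metis (mono_tags, lifting) atLeastAtMost_iff le_less mem_Collect_eq)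
  have pos_before: "f w > 0" if "0 \<le> w" "w < z" for w
  proof (rule ccontr)
    assume "\<not> f w > 0"
    moreover have "w \<in> {0..T}" using that z by auto
    ultimately obtain v where "0 \<le> v" "v \<le> w" "f v = 0"
      using zero_before[of w] by auto
    then have "z \<le> v"
      unfolding z(1) using that z by (intro cInf_lower[OF _ bdd]) (auto simp: Z_def)
    then show False using \<open>v \<le> w\<close> \<open>w < z\<close> by simp
  qed
  obtain d where "d > 0" and d: "\<And>h. h > 0 \<Longrightarrow> h < d \<Longrightarrow> f (z - h) < f z"
    using DERIV_pos_inc_left[OF deriv zeros] z by force
  define h where "h = min (d / 2) z"
  have "h > 0" "h < d" "h \<le> z"
    using \<open>d > 0\<close> z by (auto simp: h_def)
  then show False
    using d[of h] pos_before[of "z - h"] z by simp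
qed

lemma Gamma_plus1_pos: "(z::real) > 0 \<Longrightarrow> Gamma (z + 1) = z * Gamma z"
  by (rule Gamma_plus1) (auto dest: nonpos_Ints_nonpos)

definition bessel_coeff :: "real \<Rightarrow> nat \<Rightarrow> real" where
  "bessel_coeff \<mu> k = (-1) ^ k / (fact k * Gamma (real k + \<mu> + 1))"

definition bessel_series :: "real \<Rightarrow> real \<Rightarrow> real" where
  "bessel_series \<mu> t = (\<Sum>k. bessel_coeff \<mu> k * t ^ k)"

lemma bessel_coeff_Suc:
  assumes "\<mu> > -1"
  shows "bessel_coeff \<mu> (Suc k) = - bessel_coeff \<mu> k / ((real k + 1) * (real k + \<mu> + 1))"
proof -
  have Gamma_Suc: "Gamma (real (Suc k) + \<mu> + 1) = (real k + \<mu> + 1) * Gamma (real k + \<mu> + 1)"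
    using Gamma_plus1_pos[of "real k + \<mu> + 1"] assms by (simp add: algebra_simps)
  show ?thesis
    using assms Gamma_real_pos[of "real k + \<mu> + 1"]
    unfolding bessel_coeff_def Gamma_Suc by (simp add: field_simps)
qed

lemma bessel_coeff_shift:
  assumes "\<mu> > -1"
  shows "bessel_coeff (\<mu> + 1) k = bessel_coeff \<mu> k / (real k + \<mu> + 1)"
  using assms Gamma_plus1_pos[of "real k + \<mu> + 1"]
  by (simp add: bessel_coeff_def algebra_simps)

lemma diffs_bessel_coeff:
  assumes "\<mu> > -1"
  shows "diffs (bessel_coeff \<mu>) = (\<lambda>k. - bessel_coeff (\<mu> + 1) k)"
proof
  fix k
  have "diffs (bessel_coeff \<mu>) k = - ((real k + 1) * bessel_coeff \<mu> k / ((real k + 1) * (real k + \<mu> + 1)))"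
    by (simp add: diffs_def bessel_coeff_Suc[OF assms] algebra_simps)
  also have "\<dots> = - bessel_coeff (\<mu> + 1) k"
    by (simp add: bessel_coeff_shift[OF assms])
  finally show "diffs (bessel_coeff \<mu>) k = - bessel_coeff (\<mu> + 1) k" .
qed

lemma bessel_coeff_recurrence:
  assumes "\<mu> > 0"
  shows "\<mu> * bessel_coeff \<mu> k - bessel_coeff (\<mu> - 1) k = (if k = 0 then 0 else bessel_coeff (\<mu> + 1) (k - 1))"
proof (cases k)
  case 0
  then show ?thesis
    using assms bessel_coeff_shift[of "\<mu> - 1" 0] by simp
next
  case (Suc j)
  define c where "c = bessel_coeff (\<mu> - 1) j"
  define p where "p = real j + 1"
  define q where "q = real j + \<mu>"
  have pos: "p > 0" "q > 0" using assms by (simp_all add: p_def q_def)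
  have e1: "bessel_coeff (\<mu> - 1) (Suc j) = - c / (p * q)"
    using bessel_coeff_Suc[of "\<mu> - 1" j] assms by (simp add: c_def p_def q_def)
  have e2: "bessel_coeff \<mu> (Suc j) = - c / (p * q * (q + 1))"
    using bessel_coeff_shift[of "\<mu> - 1" "Suc j"] assms by (simp add: e1 p_def q_def algebra_simps)
  have e3: "bessel_coeff (\<mu> + 1) j = c / (q * (q + 1))"
    using bessel_coeff_shift[of "\<mu> - 1" j] bessel_coeff_shift[of \<mu> j] assms
    by (simp add: c_def q_def algebra_simps)
  have "(q - p + 1) * (- c / (p * q * (q + 1))) - - c / (p * q) = c / (q * (q + 1))"
    using pos by (simp add: divide_simps) (simp add: algebra_simps)
  moreover have "\<mu> = q - p + 1" by (simp add: p_def q_def)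
  ultimately have "\<mu> * bessel_coeff \<mu> (Suc j) - bessel_coeff (\<mu> - 1) (Suc j) = bessel_coeff (\<mu> + 1) j"
    unfolding e1 e2 e3 by simp
  then show ?thesis
    by (simp add: Suc)
qed

lemma summable_bessel_coeff:
  assumes "\<mu> > -1"
  shows "summable (\<lambda>k. bessel_coeff \<mu> k * t ^ k)"
proof (rule summable_ratio_test[where c="1/2" and N="nat \<lceil>2 * \<bar>t\<bar>\<rceil> + 1"])
  fix k assume k: "k \<ge> nat \<lceil>2 * \<bar>t\<bar>\<rceil> + 1"
  have "real k + \<mu> + 1 \<ge> 1" and "real k \<ge> 2 * \<bar>t\<bar>" using k assms by linarith+
  then have q: "2 * \<bar>t\<bar> \<le> (real k + 1) * (real k + \<mu> + 1)"
    using mult_mono[of "2 * \<bar>t\<bar>" "real k + 1" 1 "real k + \<mu> + 1"] by linarith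
  have "norm (bessel_coeff \<mu> (Suc k) * t ^ Suc k)
      = norm (bessel_coeff \<mu> k * t ^ k) * (\<bar>t\<bar> / ((real k + 1) * (real k + \<mu> + 1)))"
    using assms by (simp add: bessel_coeff_Suc[OF assms] abs_mult power_abs abs_divide)
  also have "\<dots> \<le> norm (bessel_coeff \<mu> k * t ^ k) * (1/2)"
    using q assms by (intro mult_left_mono) (auto simp: divide_simps)
  finally show "norm (bessel_coeff \<mu> (Suc k) * t ^ Suc k) \<le> 1/2 * norm (bessel_coeff \<mu> k * t ^ k)"
    by simp
qed simp

lemma bessel_series_has_derivative:
  assumes "\<mu> > -1"
  shows "(bessel_series \<mu> has_real_derivative - bessel_series (\<mu> + 1) t) (at t)"
proof -
  have "((\<lambda>t. \<Sum>k. bessel_coeff \<mu> k * t ^ k) has_real_derivative (\<Sum>k. diffs (bessel_coeff \<mu>) k * t ^ k)) (at t)"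
    by (rule termdiffs_strong[OF summable_bessel_coeff[OF assms, of "\<bar>t\<bar> + 1"]]) simp
  moreover have "(\<Sum>k. diffs (bessel_coeff \<mu>) k * t ^ k) = - bessel_series (\<mu> + 1) t"
    using suminf_minus[OF summable_bessel_coeff[of "\<mu> + 1" t]] assms
    by (simp add: diffs_bessel_coeff[OF assms] bessel_series_def)
  ultimately show ?thesis
    unfolding bessel_series_def[abs_def] by simp
qed

lemma bessel_series_0: "bessel_series \<mu> 0 = 1 / Gamma (\<mu> + 1)"
  using powser_zero[of "bessel_coeff \<mu>"] by (simp add: bessel_series_def bessel_coeff_def)

lemma bessel_series_0_shift:
  assumes "\<mu> > -1"
  shows "bessel_series \<mu> 0 = (\<mu> + 1) * bessel_series (\<mu> + 1) 0"
  using assms Gamma_plus1_pos[of "\<mu> + 1"] by (simp add: bessel_series_0 add.assoc)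

lemma bessel_series_recurrence:
  assumes "\<mu> > 0"
  shows "t * bessel_series (\<mu> + 1) t = \<mu> * bessel_series \<mu> t - bessel_series (\<mu> - 1) t"
proof -
  define d where "d k = (\<mu> * bessel_coeff \<mu> k - bessel_coeff (\<mu> - 1) k) * t ^ k" for k
  have "d sums (\<mu> * bessel_series \<mu> t - bessel_series (\<mu> - 1) t)"
    unfolding d_def bessel_series_def left_diff_distrib mult.assoc
    using assms by (intro sums_diff sums_mult summable_sums summable_bessel_coeff) auto
  then have "(\<lambda>k. d (Suc k)) sums (\<mu> * bessel_series \<mu> t - bessel_series (\<mu> - 1) t)"
    using sums_Suc_iff[of d] by (simp add: d_def bessel_coeff_recurrence[OF assms])
  moreover have "(\<lambda>k. d (Suc k)) sums (t * bessel_series (\<mu> + 1) t)"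
    unfolding d_def bessel_coeff_recurrence[OF assms] bessel_series_def
    using assms by (simp add: mult.left_commute sums_mult summable_sums summable_bessel_coeff)
  ultimately show ?thesis
    using sums_unique2 by blast
qed

lemma bessel_series_recurrence_at:
  assumes "\<mu> > -1"
  shows "t * bessel_series (\<mu> + 2) t = (\<mu> + 1) * bessel_series (\<mu> + 1) t - bessel_series \<mu> t"
  using bessel_series_recurrence[of "\<mu> + 1" t] assms by (simp add: add.assoc)

lemma besselJ_eq_bessel_series:
  assumes "\<nu> > -1" "x > 0"
  shows "besselJ \<nu> x = (x / 2) powr \<nu> * bessel_series \<nu> (x\<^sup>2 / 4)"
proof -
  have "(x / 2) powr (2 * real k + \<nu>) = (x / 2) powr \<nu> * (x\<^sup>2 / 4) ^ k" for k
  proof -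
    have "(x / 2) powr (2 * real k) = (x / 2) ^ (2 * k)"
      using assms by (simp add: powr_realpow[symmetric])
    also have "\<dots> = (x\<^sup>2 / 4) ^ k"
      by (simp add: power_mult power_divide)
    finally show ?thesis by (simp add: powr_add)
  qed
  then have "besselJ \<nu> x = (\<Sum>k. (x / 2) powr \<nu> * (bessel_coeff \<nu> k * (x\<^sup>2 / 4) ^ k))"
    unfolding besselJ_def bessel_coeff_def by (simp add: algebra_simps)
  also have "\<dots> = (x / 2) powr \<nu> * bessel_series \<nu> (x\<^sup>2 / 4)"
    unfolding bessel_series_def by (rule suminf_mult[OF summable_bessel_coeff[OF assms(1)]])
  finally show ?thesis .
qed

lemma bessel_series_antimono:
  assumes "\<mu> > -1" "a \<le> b" "\<forall>u\<in>{a..b}. bessel_series (\<mu> + 1) u \<ge> 0"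
  shows "bessel_series \<mu> b \<le> bessel_series \<mu> a"
  using assms bessel_series_has_derivative[OF assms(1)]
  by (intro DERIV_nonpos_imp_nonincreasing[of a b]) fastforce+

lemma bessel_series_ge_tangent_at_0:
  assumes "\<mu> > -1" "s \<ge> 0" "\<forall>u\<in>{0..s}. bessel_series (\<mu> + 2) u \<ge> 0"
  shows "bessel_series \<mu> 0 - s * bessel_series (\<mu> + 1) 0 \<le> bessel_series \<mu> s"
proof -
  have "bessel_series \<mu> 0 + 0 * bessel_series (\<mu> + 1) 0 \<le> bessel_series \<mu> s + s * bessel_series (\<mu> + 1) 0"
  proof (rule DERIV_nonneg_imp_nondecreasing[OF \<open>s \<ge> 0\<close>])
    fix u assume u: "0 \<le> u" "u \<le> s"
    have "bessel_series (\<mu> + 1) u \<le> bessel_series (\<mu> + 1) 0"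
      using assms u by (intro bessel_series_antimono) (auto simp: add.assoc)
    moreover have "((\<lambda>u. bessel_series \<mu> u + u * bessel_series (\<mu> + 1) 0) has_real_derivative
        - bessel_series (\<mu> + 1) u + bessel_series (\<mu> + 1) 0) (at u)"
      using assms by (auto intro!: derivative_eq_intros bessel_series_has_derivative)
    ultimately show "\<exists>y. ((\<lambda>u. bessel_series \<mu> u + u * bessel_series (\<mu> + 1) 0) has_real_derivative y) (at u) \<and> y \<ge> 0"
      by fastforce
  qed
  then show ?thesis by simp
qed

lemma bessel_series_pos_succ:
  assumes "\<mu> > -1" and pos: "\<forall>s\<in>{0..T}. bessel_series \<mu> s > 0"
  shows "\<forall>s\<in>{0..T}. bessel_series (\<mu> + 1) s > 0"
proof (rule pos_on_interval_if_derivative_pos_at_zeros)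
  show "(bessel_series (\<mu> + 1) has_real_derivative - bessel_series (\<mu> + 2) s) (at s)" for s
    using bessel_series_has_derivative[of "\<mu> + 1" s] assms by (simp add: add.assoc)
  show "bessel_series (\<mu> + 1) 0 > 0"
    using assms by (simp add: bessel_series_0)
  fix z assume z: "0 < z" "z \<le> T" "bessel_series (\<mu> + 1) z = 0"
  then have "z * bessel_series (\<mu> + 2) z < 0"
    using bessel_series_recurrence_at[OF assms(1), of z] pos by simp
  then show "- bessel_series (\<mu> + 2) z > 0"
    using z by (simp add: mult_less_0_iff)
qed

definition dini_series :: "real \<Rightarrow> real \<Rightarrow> real" where
  "dini_series \<nu> t = bessel_series \<nu> t - 2 * t * bessel_series (\<nu> + 1) t"

lemma dini_series_0: "dini_series \<nu> 0 = 1 / Gamma (\<nu> + 1)"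
  by (simp add: dini_series_def bessel_series_0)

lemma dini_series_has_derivative:
  assumes "\<nu> > -1"
  shows "(dini_series \<nu> has_real_derivative
      2 * t * bessel_series (\<nu> + 2) t - 3 * bessel_series (\<nu> + 1) t) (at t)"
proof -
  have "(\<nu> + 1) + 1 = \<nu> + 2" by simp
  then show ?thesis
    unfolding dini_series_def[abs_def] using assms
    by (auto intro!: derivative_eq_intros bessel_series_has_derivative simp: algebra_simps)
qed

lemma dini_eq_dini_series:
  assumes "\<nu> > -1" "x > 0"
  shows "dini \<nu> x = (x / 2) powr \<nu> * dini_series \<nu> (x\<^sup>2 / 4)"
proof -
  define D where "D = \<nu> * (x / 2) powr (\<nu> - 1) / 2 * bessel_series \<nu> (x\<^sup>2 / 4)
    - (x / 2) powr \<nu> * bessel_series (\<nu> + 1) (x\<^sup>2 / 4) * (x / 2)"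
  have "((\<lambda>y. (y / 2) powr \<nu> * bessel_series \<nu> (y\<^sup>2 / 4)) has_real_derivative D) (at x)"
    unfolding D_def using assms
    by (auto intro!: derivative_eq_intros DERIV_chain2[OF bessel_series_has_derivative]
        simp: algebra_simps)
  then have "(besselJ \<nu> has_real_derivative D) (at x)"
    by (rule has_field_derivative_transform_within_open[of _ _ _ "{0<..}"])
      (use assms besselJ_eq_bessel_series in auto)
  then have deriv_J: "deriv (besselJ \<nu>) x = D"
    by (rule DERIV_imp_deriv)
  have "x * (x / 2) powr (\<nu> - 1) = 2 * (x / 2) powr \<nu>"
    using assms by (simp add: powr_diff field_simps)
  then have "x * D = (x / 2) powr \<nu> * (\<nu> * bessel_series \<nu> (x\<^sup>2 / 4)
      - 2 * (x\<^sup>2 / 4) * bessel_series (\<nu> + 1) (x\<^sup>2 / 4))"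
    unfolding D_def by (simp add: algebra_simps power2_eq_square)
  then show ?thesis
    unfolding dini_def dini_series_def besselJ_eq_bessel_series[OF assms] deriv_J
    by (simp add: algebra_simps)
qed

lemma dini_series_pos:
  assumes "\<nu> > -1" "\<And>t. 0 < t \<Longrightarrow> t \<le> T \<Longrightarrow> dini_series \<nu> t \<noteq> 0"
  shows "\<forall>s\<in>{0..T}. dini_series \<nu> s > 0"
  using assms
  by (intro pos_on_interval_if_derivative_pos_at_zeros[OF dini_series_has_derivative])
    (auto simp: dini_series_0)

lemma bessel_series_pos_if_dini_series_pos:
  assumes "\<nu> > -1" and dini_pos: "\<forall>s\<in>{0..T}. dini_series \<nu> s > 0"
  shows "\<forall>s\<in>{0..T}. bessel_series \<nu> s > 0"
proof (rule pos_on_interval_if_derivative_pos_at_zeros)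
  show "(bessel_series \<nu> has_real_derivative - bessel_series (\<nu> + 1) s) (at s)" for s
    using bessel_series_has_derivative assms by simp
  show "bessel_series \<nu> 0 > 0"
    using assms by (simp add: bessel_series_0)
  fix z assume z: "0 < z" "z \<le> T" "bessel_series \<nu> z = 0"
  then have "- 2 * z * bessel_series (\<nu> + 1) z > 0"
    using dini_pos[rule_format, of z] by (simp add: dini_series_def)
  then show "- bessel_series (\<nu> + 1) z > 0"
    using z by (simp add: mult_less_0_iff zero_less_mult_iff)
qed

lemma bessel_series_ratio_bound:
  assumes "\<nu> > -1" "s \<ge> 0"
    and dini_pos: "dini_series \<nu> s > 0"
    and B_pos: "bessel_series (\<nu> + 1) s > 0" and C_pos: "bessel_series (\<nu> + 2) s > 0"
    and "\<forall>u\<in>{0..s}. bessel_series (\<nu> + 3) u \<ge> 0"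
  shows "(2 * \<nu> - 1) * bessel_series (\<nu> + 2) s \<le> 6 * bessel_series (\<nu> + 1) s"
proof -
  define B C where "B = bessel_series (\<nu> + 1)" and "C = bessel_series (\<nu> + 2)"
  consider "2 * \<nu> - 1 \<le> 0" | "2 * \<nu> - 1 > 0" "4 * s \<ge> 2 * \<nu> - 1" | "4 * s < 2 * \<nu> - 1"
    by linarith
  then show ?thesis
  proof cases
    case 1
    then have "(2 * \<nu> - 1) * bessel_series (\<nu> + 2) s \<le> 0"
      using C_pos by (intro mult_nonpos_nonneg) auto
    then show ?thesis
      using B_pos by linarith
  next
    case 2
    then have "s > 0" by linarith
    have "s * C s < (\<nu> + 1 - 2 * s) * B s"
      using dini_pos bessel_series_recurrence_at[OF assms(1), of s]
      by (simp add: dini_series_def B_def C_def algebra_simps)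
    then have "(2 * \<nu> - 1) * (s * C s) \<le> ((2 * \<nu> - 1) * (\<nu> + 1 - 2 * s)) * B s"
      using 2 by (simp add: mult_left_mono)
    also have "\<dots> \<le> (6 * s) * B s"
    proof (rule mult_right_mono)
      have "(2 * \<nu> - 1) * (\<nu> + 1) \<le> 4 * s * (\<nu> + 1)"
        using 2 assms(1) by (intro mult_right_mono) auto
      then show "(2 * \<nu> - 1) * (\<nu> + 1 - 2 * s) \<le> 6 * s"
        by (simp add: algebra_simps)
    qed (use B_pos B_def in simp)
    finally have "s * ((2 * \<nu> - 1) * C s) \<le> s * (6 * B s)"
      by (simp add: algebra_simps)
    then show ?thesis
      using \<open>s > 0\<close> by (simp add: B_def C_def)
  next
    case 3
    have C0: "B 0 = (\<nu> + 2) * C 0" "C 0 > 0"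
      unfolding B_def C_def using assms bessel_series_0_shift[of "\<nu> + 1"]
      by (simp_all add: add.assoc bessel_series_0)
    have "(2 * \<nu> - 1) * C s \<le> (2 * \<nu> - 1) * C 0"
      unfolding C_def using 3 assms
      by (intro mult_left_mono bessel_series_antimono) (auto simp: add.assoc)
    also have "\<dots> \<le> (6 * (\<nu> + 2) - 6 * s) * C 0"
      using 3 assms(1) C0 by (intro mult_right_mono) auto
    also have "\<dots> = 6 * (B 0 - s * C 0)"
      using C0 by (simp add: algebra_simps)
    also have "\<dots> \<le> 6 * B s"
      unfolding B_def C_def using bessel_series_ge_tangent_at_0[of "\<nu> + 1" s] assms
      by (simp add: add.assoc)
    finally show ?thesis
      by (simp add: B_def C_def)
  qed
qed

lemma dini_series_le_exp:
  assumes "\<nu> > -1" "T \<ge> 0"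
    and shift_bound: "\<forall>s\<in>{0..T}. (2 * \<nu> - 1) * bessel_series (\<nu> + 2) s \<le> 6 * bessel_series (\<nu> + 1) s"
  shows "dini_series \<nu> T \<le> exp (- (3 / (\<nu> + 1)) * T) / Gamma (\<nu> + 1)"
proof -
  define c where "c = 3 / (\<nu> + 1)"
  define G' where "G' s = 2 * s * bessel_series (\<nu> + 2) s - 3 * bessel_series (\<nu> + 1) s" for s
  have "exp (c * T) * dini_series \<nu> T \<le> exp (c * 0) * dini_series \<nu> 0"
  proof (rule DERIV_nonpos_imp_nonincreasing[OF \<open>T \<ge> 0\<close>])
    fix s assume s: "0 \<le> s" "s \<le> T"
    have "\<nu> + 1 \<noteq> 0" using assms(1) by simp
    then have "(\<nu> + 1) * c = 3"
      unfolding c_def by (metis nonzero_mult_div_cancel_left times_divide_eq_right)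
    then have "(\<nu> + 1) * (c * dini_series \<nu> s + G' s) = 3 * dini_series \<nu> s + (\<nu> + 1) * G' s"
      by (simp add: distrib_left mult.assoc[symmetric])
    also have "\<dots> = s * ((2 * \<nu> - 1) * bessel_series (\<nu> + 2) s - 6 * bessel_series (\<nu> + 1) s)"
      using bessel_series_recurrence_at[OF assms(1), of s]
      by (simp add: G'_def dini_series_def algebra_simps)
    also have "\<dots> \<le> 0"
      using shift_bound s by (simp add: mult_nonneg_nonpos)
    finally have "c * dini_series \<nu> s + G' s \<le> 0"
      using assms(1) by (simp add: mult_le_0_iff)
    moreover have "((\<lambda>t. exp (c * t) * dini_series \<nu> t) has_real_derivative
        exp (c * s) * (c * dini_series \<nu> s + G' s)) (at s)"
      unfolding G'_def using assms(1)
      by (auto intro!: derivative_eq_intros dini_series_has_derivative simp: algebra_simps)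
    ultimately show "\<exists>y. ((\<lambda>t. exp (c * t) * dini_series \<nu> t) has_real_derivative y) (at s) \<and> y \<le> 0"
      by (meson exp_gt_zero less_le_not_le mult_nonneg_nonpos)
  qed
  then have "dini_series \<nu> T * exp (c * T) \<le> 1 / Gamma (\<nu> + 1)"
    by (simp add: dini_series_0 mult.commute)
  then have "dini_series \<nu> T \<le> (1 / Gamma (\<nu> + 1)) / exp (c * T)"
    by (subst pos_le_divide_eq) simp_all
  then show ?thesis
    by (simp add: c_def exp_minus divide_inverse mult.commute)
qed

lemma dini_series_bound:
  assumes "\<nu> > -1" "T \<ge> 0"
    and "\<And>t. 0 < t \<Longrightarrow> t \<le> T \<Longrightarrow> dini_series \<nu> t \<noteq> 0"
  shows "dini_series \<nu> T \<le> exp (- (3 / (\<nu> + 1)) * T) / Gamma (\<nu> + 1)"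
proof (rule dini_series_le_exp[OF assms(1,2)])
  have dini_pos: "\<forall>s\<in>{0..T}. dini_series \<nu> s > 0"
    using dini_series_pos assms by blast
  then have "\<forall>s\<in>{0..T}. bessel_series \<nu> s > 0"
    using bessel_series_pos_if_dini_series_pos assms(1) by blast
  then have B_pos: "\<forall>s\<in>{0..T}. bessel_series (\<nu> + 1) s > 0"
    using bessel_series_pos_succ assms(1) by blast
  then have C_pos: "\<forall>s\<in>{0..T}. bessel_series (\<nu> + 2) s > 0"
    using bessel_series_pos_succ[of "\<nu> + 1" T] assms(1) by (simp add: add.assoc)
  then have D_pos: "\<forall>s\<in>{0..T}. bessel_series (\<nu> + 3) s > 0"
    using bessel_series_pos_succ[of "\<nu> + 2" T] assms(1) by (simp add: add.assoc)
  show "\<forall>s\<in>{0..T}. (2 * \<nu> - 1) * bessel_series (\<nu> + 2) s \<le> 6 * bessel_series (\<nu> + 1) s"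
  proof
    fix s assume "s \<in> {0..T}"
    then show "(2 * \<nu> - 1) * bessel_series (\<nu> + 2) s \<le> 6 * bessel_series (\<nu> + 1) s"
      using dini_pos B_pos C_pos D_pos assms(1)
      by (intro bessel_series_ratio_bound) (auto intro!: less_imp_le)
  qed
qed

lemma dini_series_nonzero_below_alpha1:
  assumes "\<nu> > -1" "0 < t" "2 * sqrt t < alpha1 \<nu>"
  shows "dini_series \<nu> t \<noteq> 0"
proof
  assume "dini_series \<nu> t = 0"
  moreover have "(2 * sqrt t)\<^sup>2 / 4 = t"
    using assms(2) by (simp add: power_mult_distrib)
  ultimately have "dini \<nu> (2 * sqrt t) = 0"
    using dini_eq_dini_series[OF assms(1), of "2 * sqrt t"] assms(2) by simp
  then have "alpha1 \<nu> \<le> 2 * sqrt t"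
    unfolding alpha1_def using assms(2) by (intro cInf_lower bdd_belowI[of _ 0]) auto
  then show False
    using assms(3) by simp
qed

theorem corollary1:
  fixes \<nu> x :: real
  assumes "\<nu> > -1" and "0 < x" and "x < alpha1 \<nu>"
  shows "dini \<nu> x \<le> x powr \<nu> * exp (- (3 * x\<^sup>2) / (4 * (\<nu> + 1))) / (2 powr \<nu> * Gamma (\<nu> + 1))"
proof -
  define T where "T = x\<^sup>2 / 4"
  have nonzero: "dini_series \<nu> t \<noteq> 0" if "0 < t" "t \<le> T" for t
  proof (rule dini_series_nonzero_below_alpha1[OF assms(1) \<open>0 < t\<close>])
    have "sqrt t \<le> sqrt T"
      using \<open>t \<le> T\<close> by simp
    also have "sqrt T = x / 2"
      using assms(2) by (simp add: T_def real_sqrt_divide)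
    finally show "2 * sqrt t < alpha1 \<nu>"
      using assms(3) by simp
  qed
  have "dini_series \<nu> T \<le> exp (- (3 / (\<nu> + 1)) * T) / Gamma (\<nu> + 1)"
    by (rule dini_series_bound[OF assms(1) _ nonzero]) (simp_all add: T_def)
  then have "dini \<nu> x \<le> (x / 2) powr \<nu> * (exp (- (3 / (\<nu> + 1)) * T) / Gamma (\<nu> + 1))"
    unfolding dini_eq_dini_series[OF assms(1,2)] T_def by (intro mult_left_mono) simp_all
  also have "\<dots> = x powr \<nu> * exp (- (3 * x\<^sup>2) / (4 * (\<nu> + 1))) / (2 powr \<nu> * Gamma (\<nu> + 1))"
    using assms(2) by (simp add: T_def powr_divide)
  finally show ?thesis .
qed

end
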